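(* Let $N\ge1$, $1<p<\infty$, $M>0$, $m=p'$ and $\chi=p$. For every $s\in(0,N/p)$ let $\rho_s\in\mathcal Y_M$ minimize $\mathcal F_{s,p}$ over $\mathcal Y_M$, and let $$\mathcal D_s=\frac{p^*_s-m'}{M}\|\rho_s\|_m^m.$$ Then $$\lim_{s\to0}\mathcal F_{s,p}(\rho_s)=0\qquad\text{and}\qquad\lim_{s\to0}\mathcal D_s=0.$$
   Context: Riesz kernel. $K_{s/2}(x)=c_{N,s/2}|x|^{s-N}$, where $c_{N,s}=\pi^{-N/2}2^{-2s}\Gamma(N/2-s)/\Gamma(s)$. Exponents. $p'=p/(p-1)$, $m'=m/(m-1)$, and $p^*_s=Np/(N-sp)$. Admissible class. $\mathcal Y_M=\{\rho\in L^1_+\cap L^m(\mathbb R^N):\ \int\rho=M,\ \int x\rho=0\}$. Free energy. $\displaystyle\mathcal F_{s,p}(\rho)=\frac1{m-1}\int\rho^m-\frac{\chi}{p'}\int(K_{s/2}*\rho)^{p'}$. *)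

theory Defs
  imports "HOL-Analysis.Analysis"
begin

definition riesz_const :: "nat \<Rightarrow> real \<Rightarrow> real" where
  "riesz_const N t = pi powr (- real N / 2) * 2 powr (- 2 * t) * Gamma (real N / 2 - t) / Gamma t"

definition riesz_kernel :: "real \<Rightarrow> 'a::euclidean_space \<Rightarrow> real" where
  "riesz_kernel s x = riesz_const DIM('a) (s / 2) * norm x powr (s - real DIM('a))"

definition riesz_conv :: "real \<Rightarrow> ('a::euclidean_space \<Rightarrow> real) \<Rightarrow> 'a \<Rightarrow> ennreal" where
  "riesz_conv s rho x = (\<integral>\<^sup>+ y. ennreal (riesz_kernel s (x - y) * rho y) \<partial>lborel)"

definition enn_powr :: "ennreal \<Rightarrow> real \<Rightarrow> ennreal" where
  "enn_powr v q = (if v = \<infinity> then \<infinity> else ennreal (enn2real v powr q))"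

definition conj_exp :: "real \<Rightarrow> real" where
  "conj_exp p = p / (p - 1)"

definition sobolev_exp :: "nat \<Rightarrow> real \<Rightarrow> real \<Rightarrow> real" where
  "sobolev_exp N s p = real N * p / (real N - s * p)"

definition admissible :: "real \<Rightarrow> real \<Rightarrow> ('a::euclidean_space \<Rightarrow> real) set" where
  "admissible m M = {rho. rho \<in> borel_measurable lborel \<and> (\<forall>x. 0 \<le> rho x)
      \<and> integrable lborel rho \<and> integrable lborel (\<lambda>x. rho x powr m)
      \<and> (\<integral>x. rho x \<partial>lborel) = M
      \<and> integrable lborel (\<lambda>x. rho x *\<^sub>R x) \<and> (\<integral>x. rho x *\<^sub>R x \<partial>lborel) = 0}"

text \<open>Free energy F_{s,p}, valued in the extended reals (the interaction term may be infinite).\<close>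

definition free_energy :: "real \<Rightarrow> real \<Rightarrow> real \<Rightarrow> real \<Rightarrow> ('a::euclidean_space \<Rightarrow> real) \<Rightarrow> ereal" where
  "free_energy m chi s p rho =
     ereal (1 / (m - 1) * (\<integral>x. rho x powr m \<partial>lborel))
     - ereal (chi / conj_exp p) *
       enn2ereal (\<integral>\<^sup>+ x. enn_powr (riesz_conv s rho x) (conj_exp p) \<partial>lborel)"

end

theory Submission
  imports Defs
begin

(*
  Write A = int rho^m and B = int (K_{s/2} * rho)^m, so that F(rho) = (p - 1) (A - B) when m = p'.
  The dilations lambda^N rho(lambda x) preserve the admissible class and scale A by lambda^(N(m-1))
  and B by lambda^((N-s)m-N); stationarity of a minimizer at lambda = 1 is the Pohozaev identity
  N(m-1) A = ((N-s)m-N) B, which turns F(rho_s) into -(p-1) m s A / ((N-s)m-N).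
  Splitting the kernel at a radius R, Young's convolution inequality gives
  B^(1/m) <= |K 1_{|x|<=R}|_1 A^(1/m) + M |K 1_{|x|>R}|_m.  Since c_{N,s/2} ~ s / (N omega_N) as s -> 0,
  a suitable R makes the first norm at most 1 and the second O(s), while Pohozaev gives
  (B/A)^(1/m) >= 1 + s/(N(m-1)).  Hence A stays bounded, and both quantities vanish because
  their prefactors s/((N-s)m-N) and p^*_s - p do.
*)

lemma powr_tangent_le:
  fixes x l m :: real
  assumes x: "0 \<le> x" and l: "0 < l" and m: "1 < m"
  shows "m * l powr (m - 1) * x \<le> x powr m + (m - 1) * l powr m"
proof (cases "x = 0")
  case True
  then show ?thesis using l m by simp
next
  case False
  with x have x: "0 < x" by simp
  have "(x powr m) powr (1/m) * (l powr m) powr ((m-1)/m) \<le> (1/m) * x powr m + ((m-1)/m) * l powr m"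
    using m x l by (intro Youngs_inequality_0) (auto simp: field_simps)
  also have "(x powr m) powr (1/m) * (l powr m) powr ((m-1)/m) = x * l powr (m - 1)"
    using x l m by (simp add: powr_powr)
  finally show ?thesis
    using m by (simp add: field_simps)
qed

lemma powr_add_le_split:
  fixes a b t m :: real
  assumes a: "0 \<le> a" and b: "0 \<le> b" and t: "0 < t" "t < 1" and m: "1 \<le> m"
  shows "(a + b) powr m \<le> t powr (1 - m) * a powr m + (1 - t) powr (1 - m) * b powr m"
proof -
  have powr_ge_1: "1 \<le> u powr (1 - m)" if "0 < u" "u \<le> 1" for u :: real
  proof -
    have "0 < u powr (m - 1)" "u powr (m - 1) \<le> 1" using that m by (auto intro: powr_le1)
    then show ?thesis using powr_minus[of u "m - 1"] by (simp add: one_le_inverse_iff)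
  qed
  have t1: "1 \<le> t powr (1 - m)" and t2: "1 \<le> (1 - t) powr (1 - m)"
    using t by (auto intro: powr_ge_1)
  consider "a = 0" | "b = 0" | "0 < a" "0 < b" using a b by linarith
  then show ?thesis
  proof cases
    case 1
    then show ?thesis using mult_right_mono[OF t2, of "b powr m"] t by simp
  next
    case 2
    then show ?thesis using mult_right_mono[OF t1, of "a powr m"] t by simp
  next
    case 3
    \<comment> \<open>convexity of \<open>x powr m\<close> at the points \<open>a / t\<close> and \<open>b / (1 - t)\<close> with weights \<open>t, 1 - t\<close>\<close>
    have "(\<lambda>x. x powr m) ((1 - (1 - t)) *\<^sub>R (a / t) + (1 - t) *\<^sub>R (b / (1 - t)))
       \<le> (1 - (1 - t)) * (a / t) powr m + (1 - t) * (b / (1 - t)) powr m"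
      using 3 t m by (intro convex_onD[OF powr_convex]) auto
    moreover have "(1 - (1 - t)) *\<^sub>R (a / t) + (1 - t) *\<^sub>R (b / (1 - t)) = a + b"
      using t by simp
    moreover have "t * (a / t) powr m = t powr (1 - m) * a powr m"
      and "(1 - t) * (b / (1 - t)) powr m = (1 - t) powr (1 - m) * b powr m"
      using t 3 by (simp_all add: powr_diff powr_divide)
    ultimately show ?thesis by simp
  qed
qed

lemma powr_add_split_eq:
  fixes a b m :: real
  assumes a: "0 < a" and b: "0 < b"
  shows "(a / (a + b)) powr (1 - m) * a powr m + (b / (a + b)) powr (1 - m) * b powr m = (a + b) powr m"
proof -
  have "(c / (a + b)) powr (1 - m) * c powr m = c * (a + b) powr (m - 1)" if "0 < c" for c
  proof -
    have "c powr (1 - m) * c powr m = c"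
      using that by (simp add: powr_add[symmetric])
    then have "(c / (a + b)) powr (1 - m) * c powr m = c / (a + b) powr (1 - m)"
      using that a b by (simp add: powr_divide)
    also have "\<dots> = c * (a + b) powr (m - 1)"
      using powr_minus_divide[of "a + b" "1 - m"] by simp
    finally show ?thesis .
  qed
  then have "(a / (a + b)) powr (1 - m) * a powr m + (b / (a + b)) powr (1 - m) * b powr m
      = (a + b) * (a + b) powr (m - 1)"
    using a b by (simp add: distrib_right)
  also have "\<dots> = (a + b) powr m"
    using a b by (simp add: powr_diff)
  finally show ?thesis .
qed

lemma powr_inverse_le_of_split_bound:
  fixes X a b m :: real
  assumes a: "0 < a" and b: "0 < b" and m: "0 < m" and X: "0 \<le> X"
    and split: "\<And>t. 0 < t \<Longrightarrow> t < 1 \<Longrightarrow> X \<le> t powr (1 - m) * a powr m + (1 - t) powr (1 - m) * b powr m"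
  shows "X powr (1 / m) \<le> a + b"
proof -
  have "1 - a / (a + b) = b / (a + b)"
    using a b by (simp add: field_simps)
  then have "X \<le> (a + b) powr m"
    using split[of "a / (a + b)"] powr_add_split_eq[OF a b, of m] a b by simp
  then have "X powr (1 / m) \<le> ((a + b) powr m) powr (1 / m)"
    using X m by (intro powr_mono2) auto
  also have "\<dots> = a + b"
    using a b m by (simp add: powr_powr)
  finally show ?thesis .
qed

lemma one_plus_le_ratio_powr_inverse:
  fixes a b m :: real
  assumes b: "0 < b" and ba: "b \<le> a" and m: "0 < m"
  shows "1 + (a - b) / (m * a) \<le> (a / b) powr (1 / m)"
proof -
  have "ln (b / a) \<le> b / a - 1"
    using b ba by (intro ln_le_minus_one) auto
  then have "(a - b) / a \<le> ln (a / b)"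
    using b ba by (simp add: ln_div diff_divide_distrib)
  then have "(a - b) / (m * a) \<le> ln (a / b) / m"
    using m by (simp add: divide_right_mono mult.commute flip: divide_divide_eq_left)
  also have "1 + ln (a / b) / m \<le> exp (ln (a / b) / m)"
    by (rule exp_ge_add_one_self)
  also have "exp (ln (a / b) / m) = (a / b) powr (1 / m)"
    using b ba by (simp add: powr_def)
  finally show ?thesis by simp
qed

section \<open>Powers of extended nonnegative reals and Jensen's inequality\<close>

lemma enn_powr_ennreal: "0 \<le> x \<Longrightarrow> enn_powr (ennreal x) q = ennreal (x powr q)"
  by (simp add: enn_powr_def)

lemma enn_powr_measurable [measurable]:
  assumes [measurable]: "f \<in> borel_measurable M"
  shows "(\<lambda>x. enn_powr (f x) q) \<in> borel_measurable M"
  unfolding enn_powr_def by measurable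

lemma enn_powr_mult_ennreal:
  assumes "0 < a" "0 < q"
  shows "enn_powr (ennreal a * v) q = ennreal (a powr q) * enn_powr v q"
proof (cases "v = \<infinity>")
  case True
  then show ?thesis using assms by (simp add: enn_powr_def ennreal_mult_top)
next
  case False
  then obtain v0 where "v = ennreal v0" "0 \<le> v0" by (cases v) auto
  then show ?thesis using assms by (simp add: enn_powr_def ennreal_mult'[symmetric] powr_mult)
qed

lemma enn_powr_add_le_split:
  fixes a b :: ennreal
  assumes t: "0 < t" "t < 1" and m: "1 \<le> m"
  shows "enn_powr (a + b) m \<le> ennreal (t powr (1 - m)) * enn_powr a m + ennreal ((1 - t) powr (1 - m)) * enn_powr b m"
proof (cases "a = \<infinity> \<or> b = \<infinity>")
  case True
  then show ?thesis using t by (auto simp: enn_powr_def ennreal_mult_top)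
next
  case False
  then obtain a0 b0 where ab: "a = ennreal a0" "b = ennreal b0" "0 \<le> a0" "0 \<le> b0"
    by (cases a; cases b) auto
  then show ?thesis using powr_add_le_split[OF ab(3,4) t m]
    by (simp add: enn_powr_ennreal ennreal_plus[symmetric] ennreal_mult'[symmetric] del: ennreal_plus)
qed

lemma nn_integral_weighted_tangent_le:
  fixes w f :: "'b \<Rightarrow> real"
  assumes [measurable]: "w \<in> borel_measurable N" "f \<in> borel_measurable N"
    and w: "\<And>y. 0 \<le> w y" and f: "\<And>y. 0 \<le> f y"
    and W: "(\<integral>\<^sup>+y. ennreal (w y) \<partial>N) = ennreal W" and l: "0 < l" and m: "1 < m"
  shows "ennreal (m * l powr (m - 1)) * (\<integral>\<^sup>+y. ennreal (w y * f y) \<partial>N)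
    \<le> (\<integral>\<^sup>+y. ennreal (w y * f y powr m) \<partial>N) + ennreal ((m - 1) * l powr m) * ennreal W"
proof -
  have tangent: "ennreal (m * l powr (m - 1)) * ennreal (w y * f y)
      \<le> ennreal (w y * f y powr m) + ennreal ((m - 1) * l powr m) * ennreal (w y)" for y
  proof -
    have "w y * (m * l powr (m - 1) * f y) \<le> w y * (f y powr m + (m - 1) * l powr m)"
      using powr_tangent_le[OF f l m] w by (intro mult_left_mono) auto
    then have "m * l powr (m - 1) * (w y * f y) \<le> w y * f y powr m + (m - 1) * l powr m * w y"
      by (simp add: algebra_simps)
    then show ?thesis using m w[of y] f[of y] l
      by (simp add: ennreal_mult'[symmetric] ennreal_plus[symmetric] del: ennreal_plus)
  qed
  have "ennreal (m * l powr (m - 1)) * (\<integral>\<^sup>+y. ennreal (w y * f y) \<partial>N)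
      = (\<integral>\<^sup>+y. ennreal (m * l powr (m - 1)) * ennreal (w y * f y) \<partial>N)"
    by (simp add: nn_integral_cmult)
  also have "\<dots> \<le> (\<integral>\<^sup>+y. ennreal (w y * f y powr m) + ennreal ((m - 1) * l powr m) * ennreal (w y) \<partial>N)"
    by (intro nn_integral_mono tangent)
  also have "\<dots> = (\<integral>\<^sup>+y. ennreal (w y * f y powr m) \<partial>N) + ennreal ((m - 1) * l powr m) * ennreal W"
    by (simp add: nn_integral_add nn_integral_cmult W)
  finally show ?thesis .
qed

lemma enn_powr_nn_integral_weighted_le:
  fixes w f :: "'b \<Rightarrow> real"
  assumes [measurable]: "w \<in> borel_measurable N" "f \<in> borel_measurable N"
    and w: "\<And>y. 0 \<le> w y" and f: "\<And>y. 0 \<le> f y"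
    and W: "(\<integral>\<^sup>+y. ennreal (w y) \<partial>N) = ennreal W" and W_pos: "0 < W" and m: "1 < m"
  shows "enn_powr (\<integral>\<^sup>+y. ennreal (w y * f y) \<partial>N) m
    \<le> ennreal (W powr (m - 1)) * (\<integral>\<^sup>+y. ennreal (w y * f y powr m) \<partial>N)"
proof -
  define I where "I = (\<integral>\<^sup>+y. ennreal (w y * f y) \<partial>N)"
  define P where "P = (\<integral>\<^sup>+y. ennreal (w y * f y powr m) \<partial>N)"
  consider "P = \<infinity>" | "P = 0" | P0 where "P = ennreal P0" "0 < P0"
    by (cases P) (auto simp: le_less)
  then show ?thesis
  proof cases
    case 1
    then show ?thesis using W_pos by (simp add: P_def[symmetric] ennreal_mult_top)
  next
    case 2
    then have "AE y in N. ennreal (w y * f y powr m) = 0"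
      by (simp add: P_def nn_integral_0_iff_AE)
    then have "AE y in N. ennreal (w y * f y) = 0"
    proof eventually_elim
      case (elim y)
      moreover have "0 \<le> w y * f y powr m"
        using w[of y] by simp
      ultimately have "w y * f y powr m = 0"
        by (simp add: ennreal_eq_0_iff)
      then show ?case by auto
    qed
    then have "I = 0" by (simp add: I_def nn_integral_0_iff_AE)
    then show ?thesis using m by (simp add: I_def[symmetric] enn_powr_def)
  next
    case 3
    \<comment> \<open>the tangent line at \<open>l\<close> with \<open>W * l powr m = P\<close> is optimal\<close>
    define l where "l = (P0 / W) powr (1 / m)"
    have l: "0 < l" and lm: "l powr m = P0 / W"
      using 3 W_pos m by (simp_all add: l_def powr_powr)
    have c: "0 < m * l powr (m - 1)" using m l by simp
    have "ennreal (m * l powr (m - 1)) * I \<le> P + ennreal ((m - 1) * l powr m) * ennreal W"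
      unfolding I_def P_def by (rule nn_integral_weighted_tangent_le[OF _ _ w f W l m]) measurable
    also have "\<dots> = ennreal (m * P0)"
      using 3 m l W_pos by (simp add: lm ennreal_mult'[symmetric] ennreal_plus[symmetric] field_simps del: ennreal_plus)
    finally have I_le: "ennreal (m * l powr (m - 1)) * I \<le> ennreal (m * P0)" .
    then obtain I0 where I0: "I = ennreal I0" "0 \<le> I0"
      using c m l by (cases I) (auto simp: ennreal_mult_top top_unique)
    have "m * l powr (m - 1) * I0 \<le> m * P0"
      using I_le I0 c 3 m by (simp add: ennreal_mult'[symmetric] ennreal_le_iff)
    then have "I0 \<le> P0 / l powr (m - 1)"
      using c m l by (simp add: field_simps)
    then have "I0 powr m \<le> (P0 / l powr (m - 1)) powr m"
      using I0 m by (intro powr_mono2) auto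
    also have "\<dots> = P0 powr m / (l powr m) powr (m - 1)"
      using 3 l by (simp add: powr_divide powr_powr ac_simps)
    also have "\<dots> = W powr (m - 1) * P0"
      using 3 W_pos m by (simp add: lm powr_divide powr_diff field_simps)
    finally show ?thesis using I0 3 W_pos
      by (simp add: I_def[symmetric] P_def[symmetric] enn_powr_ennreal ennreal_mult'[symmetric] ennreal_leI)
  qed
qed

section \<open>Polar coordinates and affine changes of variables\<close>

definition radial_density :: "nat \<Rightarrow> real \<Rightarrow> real" where
  "radial_density n r = (if 0 \<le> r then real n * unit_ball_vol (real n) * r ^ (n - 1) else 0)"

lemma radial_density_nonneg: "0 \<le> radial_density n r"
  by (simp add: radial_density_def)

lemma radial_density_measurable [measurable]: "radial_density n \<in> borel_measurable borel"
  unfolding radial_density_def by measurable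

lemma radial_density_powr:
  assumes "0 < r" "0 < n"
  shows "radial_density n r * r powr e = real n * unit_ball_vol (real n) * r powr (real n - 1 + e)"
  using assms by (simp add: radial_density_def powr_realpow[symmetric] powr_add of_nat_diff)

lemma emeasure_radial_density_atMost:
  "emeasure (density lborel (\<lambda>r. ennreal (radial_density DIM('a) r))) {..a}
    = emeasure lborel (cball (0::'a::euclidean_space) a)"
proof (cases "0 \<le> a")
  case True
  let ?n = "DIM('a)"
  have "((\<lambda>r. unit_ball_vol (real ?n) * r ^ ?n) has_real_derivative radial_density ?n r) (at r within {0..a})"
    if "r \<in> {0..a}" for r
    using that by (auto intro!: derivative_eq_intros simp: radial_density_def)
  then have "(radial_density ?n has_integral unit_ball_vol (real ?n) * a ^ ?n - unit_ball_vol (real ?n) * 0 ^ ?n) {0..a}"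
    using True by (intro fundamental_theorem_of_calculus)
      (auto simp: has_real_derivative_iff_has_vector_derivative[symmetric])
  then have "(radial_density ?n has_integral unit_ball_vol (real ?n) * a ^ ?n) {0..a}"
    by (simp add: zero_power)
  then have "((\<lambda>r. if r \<in> {0..a} then radial_density ?n r else 0) has_integral unit_ball_vol (real ?n) * a ^ ?n) UNIV"
    by (subst has_integral_restrict_UNIV)
  then have "(\<integral>\<^sup>+r. ennreal (if r \<in> {0..a} then radial_density ?n r else 0) \<partial>lborel)
      = ennreal (unit_ball_vol (real ?n) * a ^ ?n)"
    by (rule nn_integral_has_integral_lborel[rotated 2]) (auto simp: radial_density_nonneg)
  moreover have "ennreal (if r \<in> {0..a} then radial_density ?n r else 0)
      = ennreal (radial_density ?n r) * indicator {..a} r" for r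
    by (auto simp: radial_density_def indicator_def)
  ultimately show ?thesis
    using True by (simp add: emeasure_density emeasure_cball)
next
  case False
  then have "(\<lambda>r. ennreal (radial_density DIM('a) r) * indicator {..a} r) = (\<lambda>_. 0)"
    by (auto simp: fun_eq_iff radial_density_def indicator_def)
  then show ?thesis
    using False by (simp add: emeasure_density)
qed

lemma distr_norm_lborel:
  "distr (lborel::'a::euclidean_space measure) borel norm = density lborel (\<lambda>r. ennreal (radial_density DIM('a) r))"
proof (rule measure_eqI_generator_eq[where E="range atMost" and \<Omega>=UNIV and A="\<lambda>i. {..real i}"])
  have cball: "norm -` {..a} = cball (0::'a) a" for a
    by (auto simp: cball_def)
  show "X \<in> range atMost \<Longrightarrow> emeasure (distr (lborel::'a measure) borel norm) X
      = emeasure (density lborel (\<lambda>r. ennreal (radial_density DIM('a) r))) X" for X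
    by (auto simp: emeasure_distr cball emeasure_radial_density_atMost)
  show "emeasure (distr (lborel::'a measure) borel norm) {..real i} \<noteq> \<infinity>" for i
    by (simp add: emeasure_distr cball emeasure_cball)
qed (auto simp: Int_stable_def borel_eq_atMost real_arch_simple)

lemma nn_integral_radial:
  fixes f :: "real \<Rightarrow> ennreal"
  assumes [measurable]: "f \<in> borel_measurable borel"
  shows "(\<integral>\<^sup>+x. f (norm x) \<partial>(lborel::'a::euclidean_space measure))
    = (\<integral>\<^sup>+r. ennreal (radial_density DIM('a) r) * f r \<partial>lborel)"
proof -
  have "(\<integral>\<^sup>+x. f (norm x) \<partial>(lborel::'a measure)) = (\<integral>\<^sup>+r. f r \<partial>distr (lborel::'a measure) borel norm)"
    by (subst nn_integral_distr) auto
  then show ?thesis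
    by (simp add: distr_norm_lborel nn_integral_density)
qed

lemma nn_integral_norm_powr_cball:
  assumes R: "0 < R" and e: "- real DIM('a) < e"
  shows "(\<integral>\<^sup>+x. ennreal (if norm x \<le> R then norm x powr e else 0) \<partial>(lborel::'a::euclidean_space measure))
    = ennreal (real DIM('a) * unit_ball_vol (real DIM('a)) * R powr (real DIM('a) + e) / (real DIM('a) + e))"
proof -
  let ?n = "DIM('a)" let ?c = "real ?n * unit_ball_vol (real ?n)"
  have "(\<integral>\<^sup>+x. ennreal (if norm x \<le> R then norm x powr e else 0) \<partial>(lborel::'a measure))
      = (\<integral>\<^sup>+r. ennreal (radial_density ?n r) * ennreal (if r \<le> R then r powr e else 0) \<partial>lborel)"
    by (rule nn_integral_radial[where f="\<lambda>r. ennreal (if r \<le> R then r powr e else 0)"]) measurable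
  also have "\<dots> = (\<integral>\<^sup>+r. ennreal (if r \<in> {0..R} then ?c * r powr (real ?n - 1 + e) else 0) \<partial>lborel)"
  proof (intro nn_integral_cong)
    fix r :: real
    show "ennreal (radial_density ?n r) * ennreal (if r \<le> R then r powr e else 0)
        = ennreal (if r \<in> {0..R} then ?c * r powr (real ?n - 1 + e) else 0)"
    proof (cases "0 < r")
      case True
      then show ?thesis
        using radial_density_powr[OF True, of ?n e] radial_density_nonneg[of ?n r]
        by (auto simp: ennreal_mult'[symmetric])
    qed (auto simp: radial_density_def)
  qed
  also have "\<dots> = ennreal (?c * (R powr (real ?n - 1 + e + 1) / (real ?n - 1 + e + 1)))"
  proof (rule nn_integral_has_integral_lborel)
    have "((\<lambda>r. ?c * r powr (real ?n - 1 + e)) has_integral ?c * (R powr (real ?n - 1 + e + 1) / (real ?n - 1 + e + 1))) {0..R}"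
      using e R by (intro has_integral_mult_right has_integral_powr_from_0) auto
    then show "((\<lambda>r. if r \<in> {0..R} then ?c * r powr (real ?n - 1 + e) else 0) has_integral ?c * (R powr (real ?n - 1 + e + 1) / (real ?n - 1 + e + 1))) UNIV"
      by (subst has_integral_restrict_UNIV)
  qed auto
  finally show ?thesis by simp
qed

lemma nn_integral_norm_powr_outside_cball:
  assumes R: "0 < R" and e: "e < - real DIM('a)"
  shows "(\<integral>\<^sup>+x. ennreal (if R < norm x then norm x powr e else 0) \<partial>(lborel::'a::euclidean_space measure))
    = ennreal (real DIM('a) * unit_ball_vol (real DIM('a)) * R powr (real DIM('a) + e) / - (real DIM('a) + e))"
proof -
  let ?n = "DIM('a)" let ?c = "real ?n * unit_ball_vol (real ?n)"
  have "(\<integral>\<^sup>+x. ennreal (if R < norm x then norm x powr e else 0) \<partial>(lborel::'a measure))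
      = (\<integral>\<^sup>+r. ennreal (radial_density ?n r) * ennreal (if R < r then r powr e else 0) \<partial>lborel)"
    by (rule nn_integral_radial[where f="\<lambda>r. ennreal (if R < r then r powr e else 0)"]) measurable
  also have "\<dots> = (\<integral>\<^sup>+r. ennreal (if r \<in> {R..} then ?c * r powr (real ?n - 1 + e) else 0) \<partial>lborel)"
    using AE_lborel_singleton[of R]
  proof (intro nn_integral_cong_AE, eventually_elim)
    case (elim r)
    then show ?case
      using R radial_density_powr[of r ?n e] radial_density_nonneg[of ?n r]
      by (auto simp: ennreal_mult'[symmetric])
  qed
  also have "\<dots> = ennreal (?c * (- (R powr (real ?n - 1 + e + 1)) / (real ?n - 1 + e + 1)))"
  proof (rule nn_integral_has_integral_lborel)
    have "((\<lambda>r. ?c * r powr (real ?n - 1 + e)) has_integral ?c * (- (R powr (real ?n - 1 + e + 1)) / (real ?n - 1 + e + 1))) {R..}"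
      using e R by (intro has_integral_mult_right has_integral_powr_to_inf) auto
    then show "((\<lambda>r. if r \<in> {R..} then ?c * r powr (real ?n - 1 + e) else 0) has_integral ?c * (- (R powr (real ?n - 1 + e + 1)) / (real ?n - 1 + e + 1))) UNIV"
      by (subst has_integral_restrict_UNIV)
  qed auto
  finally show ?thesis by (simp add: minus_divide_right)
qed

lemma nn_integral_lborel_affine:
  fixes f :: "'a::euclidean_space \<Rightarrow> ennreal" and c :: real
  assumes [measurable]: "f \<in> borel_measurable borel" and c: "c \<noteq> 0"
  shows "(\<integral>\<^sup>+x. f x \<partial>lborel) = ennreal (\<bar>c\<bar> ^ DIM('a)) * (\<integral>\<^sup>+x. f (t + c *\<^sub>R x) \<partial>lborel)"
  by (subst lborel_affine[OF c, of t]) (simp add: nn_integral_density nn_integral_distr nn_integral_cmult)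

lemma lborel_integrable_affine_iff:
  fixes f :: "'a::euclidean_space \<Rightarrow> 'b::{banach, second_countable_topology}" and c :: real
  assumes [measurable]: "f \<in> borel_measurable borel" and c: "c \<noteq> 0"
  shows "integrable lborel (\<lambda>x. f (t + c *\<^sub>R x)) \<longleftrightarrow> integrable lborel f"
  using nn_integral_lborel_affine[of "\<lambda>x. ennreal (norm (f x))" c t] c
  by (auto simp: integrable_iff_bounded ennreal_mult_less_top)

lemma lborel_integral_affine:
  fixes f :: "'a::euclidean_space \<Rightarrow> 'b::{banach, second_countable_topology}" and c :: real
  assumes [measurable]: "f \<in> borel_measurable borel" and c: "c \<noteq> 0"
  shows "(\<integral>x. f x \<partial>lborel) = \<bar>c\<bar> ^ DIM('a) *\<^sub>R (\<integral>x. f (t + c *\<^sub>R x) \<partial>lborel)"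
proof -
  have "(\<integral>x. f x \<partial>lborel) = (\<integral>x. f x \<partial>density (distr lborel borel (\<lambda>x. t + c *\<^sub>R x)) (\<lambda>_. \<bar>c\<bar> ^ DIM('a)))"
    using lborel_affine[OF c, of t] by simp
  also have "\<dots> = (\<integral>x. \<bar>c\<bar> ^ DIM('a) *\<^sub>R f (t + c *\<^sub>R x) \<partial>lborel)"
    by (subst integral_density) (auto simp: integral_distr)
  finally show ?thesis by simp
qed

section \<open>Young's convolution inequality\<close>

lemma nn_integral_reflect_translate:
  fixes f :: "'a::euclidean_space \<Rightarrow> ennreal"
  assumes [measurable]: "f \<in> borel_measurable borel"
  shows "(\<integral>\<^sup>+y. f (x - y) \<partial>lborel) = (\<integral>\<^sup>+y. f y \<partial>lborel)"
  using nn_integral_lborel_affine[of f "-1" x] by simp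

lemma nn_integral_translate:
  fixes f :: "'a::euclidean_space \<Rightarrow> ennreal"
  assumes [measurable]: "f \<in> borel_measurable borel"
  shows "(\<integral>\<^sup>+x. f (x - y) \<partial>lborel) = (\<integral>\<^sup>+x. f x \<partial>lborel)"
  using nn_integral_lborel_affine[of f 1 "-y"] by simp

lemma nn_integral_convolution_commute:
  fixes k f :: "'a::euclidean_space \<Rightarrow> real"
  assumes [measurable]: "k \<in> borel_measurable borel" "f \<in> borel_measurable borel"
  shows "(\<integral>\<^sup>+y. ennreal (k (x - y) * f y) \<partial>lborel) = (\<integral>\<^sup>+y. ennreal (f (x - y) * k y) \<partial>lborel)"
  using nn_integral_reflect_translate[of "\<lambda>y. ennreal (f (x - y) * k y)" x] by (simp add: mult.commute)

lemma nn_integral_enn_powr_convolution_le: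
  fixes k f :: "'a::euclidean_space \<Rightarrow> real"
  assumes [measurable]: "k \<in> borel_measurable borel" "f \<in> borel_measurable borel"
    and k: "\<And>z. 0 \<le> k z" and f: "\<And>y. 0 \<le> f y"
    and K: "(\<integral>\<^sup>+z. ennreal (k z) \<partial>lborel) = ennreal K" and K_pos: "0 < K" and m: "1 < m"
  shows "(\<integral>\<^sup>+x. enn_powr (\<integral>\<^sup>+y. ennreal (k (x - y) * f y) \<partial>lborel) m \<partial>lborel)
    \<le> ennreal (K powr m) * (\<integral>\<^sup>+y. ennreal (f y powr m) \<partial>lborel)"
proof -
  have "(\<integral>\<^sup>+x. enn_powr (\<integral>\<^sup>+y. ennreal (k (x - y) * f y) \<partial>lborel) m \<partial>lborel)
      \<le> (\<integral>\<^sup>+x. ennreal (K powr (m - 1)) * (\<integral>\<^sup>+y. ennreal (k (x - y) * f y powr m) \<partial>lborel) \<partial>lborel)"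
  proof (intro nn_integral_mono enn_powr_nn_integral_weighted_le[OF _ _ k f _ K_pos m])
    show "(\<integral>\<^sup>+y. ennreal (k (x - y)) \<partial>lborel) = ennreal K" for x
      using nn_integral_reflect_translate[of "\<lambda>z. ennreal (k z)" x] K by simp
  qed measurable
  also have "\<dots> = ennreal (K powr (m - 1)) * (\<integral>\<^sup>+x. (\<integral>\<^sup>+y. ennreal (k (x - y) * f y powr m) \<partial>lborel) \<partial>lborel)"
    by (rule nn_integral_cmult) measurable
  also have "(\<integral>\<^sup>+x. (\<integral>\<^sup>+y. ennreal (k (x - y) * f y powr m) \<partial>lborel) \<partial>lborel)
      = (\<integral>\<^sup>+y. (\<integral>\<^sup>+x. ennreal (k (x - y)) * ennreal (f y powr m) \<partial>lborel) \<partial>(lborel::'a measure))"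
    using k by (subst lborel_pair.Fubini') (simp_all add: ennreal_mult)
  also have "\<dots> = (\<integral>\<^sup>+y. ennreal K * ennreal (f y powr m) \<partial>lborel)"
    using nn_integral_translate[of "\<lambda>z. ennreal (k z)"] K by (simp add: nn_integral_multc)
  also have "\<dots> = ennreal K * (\<integral>\<^sup>+y. ennreal (f y powr m) \<partial>lborel)"
    by (rule nn_integral_cmult) measurable
  also have "ennreal (K powr (m - 1)) * (ennreal K * (\<integral>\<^sup>+y. ennreal (f y powr m) \<partial>lborel))
      = ennreal (K powr m) * (\<integral>\<^sup>+y. ennreal (f y powr m) \<partial>lborel)"
    using K_pos by (simp add: mult.assoc[symmetric] ennreal_mult'[symmetric] powr_diff)
  finally show ?thesis .
qed

section \<open>Near and far parts of the Riesz kernel\<close>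

lemma riesz_kernel_measurable [measurable]: "riesz_kernel s \<in> borel_measurable borel"
  unfolding riesz_kernel_def by measurable

lemma riesz_conv_measurable [measurable]:
  assumes [measurable]: "rho \<in> borel_measurable borel"
  shows "riesz_conv s rho \<in> borel_measurable borel"
proof -
  have "riesz_conv s rho \<in> borel_measurable lborel"
    unfolding riesz_conv_def by measurable
  then show ?thesis by (simp add: measurable_cong_sets[OF sets_lborel refl])
qed

lemma riesz_const_pos:
  assumes "0 < s" "s < real n"
  shows "0 < riesz_const n (s / 2)"
  using assms by (simp add: riesz_const_def Gamma_real_pos)

lemma riesz_kernel_nonneg:
  assumes "0 < s" "s < real DIM('a)"
  shows "0 \<le> riesz_kernel s (z::'a::euclidean_space)"
  using riesz_const_pos[OF assms] by (simp add: riesz_kernel_def)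

definition riesz_kernel_near :: "real \<Rightarrow> real \<Rightarrow> 'a::euclidean_space \<Rightarrow> real" where
  "riesz_kernel_near s R z = (if norm z \<le> R then riesz_kernel s z else 0)"

definition riesz_kernel_far :: "real \<Rightarrow> real \<Rightarrow> 'a::euclidean_space \<Rightarrow> real" where
  "riesz_kernel_far s R z = (if R < norm z then riesz_kernel s z else 0)"

lemma riesz_kernel_near_measurable [measurable]: "riesz_kernel_near s R \<in> borel_measurable borel"
  unfolding riesz_kernel_near_def by measurable

lemma riesz_kernel_far_measurable [measurable]: "riesz_kernel_far s R \<in> borel_measurable borel"
  unfolding riesz_kernel_far_def by measurable

lemma riesz_kernel_near_far: "riesz_kernel s z = riesz_kernel_near s R z + riesz_kernel_far s R z"
  by (simp add: riesz_kernel_near_def riesz_kernel_far_def)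

definition riesz_energy_exponent :: "nat \<Rightarrow> real \<Rightarrow> real \<Rightarrow> real" where
  "riesz_energy_exponent n m s = (real n - s) * m - real n"

definition riesz_near_mass :: "nat \<Rightarrow> real \<Rightarrow> real \<Rightarrow> real" where
  "riesz_near_mass n s R = riesz_const n (s / 2) * (real n * unit_ball_vol (real n) * R powr s / s)"

definition riesz_far_energy :: "nat \<Rightarrow> real \<Rightarrow> real \<Rightarrow> real \<Rightarrow> real" where
  "riesz_far_energy n m s R = riesz_const n (s / 2) powr m
     * (real n * unit_ball_vol (real n) * R powr (- riesz_energy_exponent n m s) / riesz_energy_exponent n m s)"

lemma nn_integral_riesz_kernel_near:
  assumes s: "0 < s" "s < real DIM('a)" and R: "0 < R"
  shows "(\<integral>\<^sup>+z. ennreal (riesz_kernel_near s R (z::'a::euclidean_space)) \<partial>lborel)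
    = ennreal (riesz_near_mass DIM('a) s R)"
proof -
  let ?c = "riesz_const DIM('a) (s / 2)"
  have c: "0 < ?c" using riesz_const_pos[OF s] .
  have "(\<integral>\<^sup>+z. ennreal (riesz_kernel_near s R (z::'a)) \<partial>lborel)
      = (\<integral>\<^sup>+z. ennreal ?c * ennreal (if norm z \<le> R then norm z powr (s - real DIM('a)) else 0) \<partial>(lborel::'a measure))"
    using c by (intro nn_integral_cong) (auto simp: riesz_kernel_near_def riesz_kernel_def ennreal_mult'[symmetric])
  also have "\<dots> = ennreal ?c * ennreal (real DIM('a) * unit_ball_vol (real DIM('a)) * R powr s / s)"
    using nn_integral_norm_powr_cball[OF R, of "s - real DIM('a)", where 'a='a] s
    by (subst nn_integral_cmult) simp_all
  finally show ?thesis
    using c by (simp add: riesz_near_mass_def ennreal_mult'[symmetric])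
qed

lemma nn_integral_riesz_kernel_far_powr:
  assumes s: "0 < s" "s < real DIM('a)" and R: "0 < R" and m: "0 < m"
    and exponent: "0 < riesz_energy_exponent DIM('a) m s"
  shows "(\<integral>\<^sup>+z. ennreal (riesz_kernel_far s R (z::'a::euclidean_space) powr m) \<partial>lborel)
    = ennreal (riesz_far_energy DIM('a) m s R)"
proof -
  let ?c = "riesz_const DIM('a) (s / 2)" and ?e = "(s - real DIM('a)) * m"
  have c: "0 < ?c" using riesz_const_pos[OF s] .
  have e: "?e < - real DIM('a)" and e': "real DIM('a) + ?e = - riesz_energy_exponent DIM('a) m s"
    using exponent by (simp_all add: riesz_energy_exponent_def algebra_simps)
  have "(\<integral>\<^sup>+z. ennreal (riesz_kernel_far s R (z::'a) powr m) \<partial>lborel)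
      = (\<integral>\<^sup>+z. ennreal (?c powr m) * ennreal (if R < norm z then norm z powr ?e else 0) \<partial>(lborel::'a measure))"
    using c R by (intro nn_integral_cong)
      (auto simp: riesz_kernel_far_def riesz_kernel_def ennreal_mult'[symmetric] powr_mult powr_powr)
  also have "\<dots> = ennreal (?c powr m) * ennreal (real DIM('a) * unit_ball_vol (real DIM('a)) * R powr (real DIM('a) + ?e) / - (real DIM('a) + ?e))"
    using nn_integral_norm_powr_outside_cball[OF R e]
    by (subst nn_integral_cmult) simp_all
  finally show ?thesis
    unfolding e' by (simp add: riesz_far_energy_def ennreal_mult'[symmetric])
qed

lemma nn_integral_riesz_conv_powr_le:
  fixes rho :: "'a::euclidean_space \<Rightarrow> real"
  assumes [measurable]: "rho \<in> borel_measurable borel" and rho: "\<And>x. 0 \<le> rho x"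
    and mass: "(\<integral>\<^sup>+x. ennreal (rho x) \<partial>lborel) = ennreal M" and M: "0 < M"
    and s: "0 < s" "s < real DIM('a)" and R: "0 < R" and m: "1 < m"
    and exponent: "0 < riesz_energy_exponent DIM('a) m s" and t: "0 < t" "t < 1"
  shows "(\<integral>\<^sup>+x. enn_powr (riesz_conv s rho x) m \<partial>lborel)
    \<le> ennreal (t powr (1 - m) * riesz_near_mass DIM('a) s R powr m) * (\<integral>\<^sup>+x. ennreal (rho x powr m) \<partial>lborel)
      + ennreal ((1 - t) powr (1 - m) * M powr m * riesz_far_energy DIM('a) m s R)"
proof -
  let ?G = "riesz_near_mass DIM('a) s R" and ?H = "riesz_far_energy DIM('a) m s R"
  define near where "near x = (\<integral>\<^sup>+y. ennreal (riesz_kernel_near s R (x - y) * rho y) \<partial>lborel)" for x :: 'a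
  define far where "far x = (\<integral>\<^sup>+y. ennreal (riesz_kernel_far s R (x - y) * rho y) \<partial>lborel)" for x :: 'a
  have [measurable]: "near \<in> borel_measurable lborel" "far \<in> borel_measurable lborel"
    unfolding near_def far_def by measurable
  have kernels_nonneg: "0 \<le> riesz_kernel_near s R z" "0 \<le> riesz_kernel_far s R z" for z :: 'a
    using riesz_kernel_nonneg[OF s] by (simp_all add: riesz_kernel_near_def riesz_kernel_far_def)
  have "riesz_conv s rho x = near x + far x" for x
    unfolding riesz_conv_def near_def far_def riesz_kernel_near_far[where R=R]
    using kernels_nonneg rho
    by (subst nn_integral_add[symmetric]) (auto simp: distrib_right intro!: nn_integral_cong)
  then have "(\<integral>\<^sup>+x. enn_powr (riesz_conv s rho x) m \<partial>lborel)
      \<le> (\<integral>\<^sup>+x. ennreal (t powr (1 - m)) * enn_powr (near x) m + ennreal ((1 - t) powr (1 - m)) * enn_powr (far x) m \<partial>lborel)"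
    using t m by (auto intro!: nn_integral_mono enn_powr_add_le_split)
  also have "\<dots> = ennreal (t powr (1 - m)) * (\<integral>\<^sup>+x. enn_powr (near x) m \<partial>lborel)
      + ennreal ((1 - t) powr (1 - m)) * (\<integral>\<^sup>+x. enn_powr (far x) m \<partial>lborel)"
    by (simp add: nn_integral_add nn_integral_cmult)
  also have "\<dots> \<le> ennreal (t powr (1 - m)) * (ennreal (?G powr m) * (\<integral>\<^sup>+x. ennreal (rho x powr m) \<partial>lborel))
      + ennreal ((1 - t) powr (1 - m)) * (ennreal (M powr m) * ennreal ?H)"
  proof (intro add_mono mult_left_mono order_refl zero_le)
    show "(\<integral>\<^sup>+x. enn_powr (near x) m \<partial>lborel) \<le> ennreal (?G powr m) * (\<integral>\<^sup>+x. ennreal (rho x powr m) \<partial>lborel)"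
      unfolding near_def
      using riesz_const_pos[OF s] R s
      by (intro nn_integral_enn_powr_convolution_le[OF _ _ _ rho nn_integral_riesz_kernel_near[OF s R] _ m])
        (auto simp: kernels_nonneg riesz_near_mass_def)
    have "(\<integral>\<^sup>+x. enn_powr (far x) m \<partial>lborel)
        = (\<integral>\<^sup>+x. enn_powr (\<integral>\<^sup>+y. ennreal (rho (x - y) * riesz_kernel_far s R y) \<partial>lborel) m \<partial>lborel)"
      unfolding far_def by (subst nn_integral_convolution_commute) simp_all
    also have "\<dots> \<le> ennreal (M powr m) * (\<integral>\<^sup>+y. ennreal (riesz_kernel_far s R (y::'a) powr m) \<partial>lborel)"
      by (intro nn_integral_enn_powr_convolution_le[OF _ _ rho _ mass M m]) (auto simp: kernels_nonneg)
    also have "\<dots> = ennreal (M powr m) * ennreal ?H"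
      using nn_integral_riesz_kernel_far_powr[OF s R _ exponent] m by simp
    finally show "(\<integral>\<^sup>+x. enn_powr (far x) m \<partial>lborel) \<le> ennreal (M powr m) * ennreal ?H" .
  qed
  also have "\<dots> = ennreal (t powr (1 - m) * ?G powr m) * (\<integral>\<^sup>+x. ennreal (rho x powr m) \<partial>lborel)
      + ennreal ((1 - t) powr (1 - m) * M powr m * ?H)"
    using M by (simp add: ennreal_mult' mult.assoc)
  finally show ?thesis .
qed

section \<open>Mass-preserving dilations\<close>

definition dilate :: "real \<Rightarrow> ('a::euclidean_space \<Rightarrow> real) \<Rightarrow> 'a \<Rightarrow> real" where
  "dilate l rho x = l ^ DIM('a) * rho (l *\<^sub>R x)"

lemma dilate_measurable [measurable]:
  assumes [measurable]: "rho \<in> borel_measurable borel"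
  shows "dilate l rho \<in> borel_measurable borel"
  unfolding dilate_def by measurable

lemma lborel_integrable_scale_iff:
  fixes f :: "'a::euclidean_space \<Rightarrow> 'b::{banach, second_countable_topology}"
  assumes "f \<in> borel_measurable borel" and "0 < l"
  shows "integrable lborel (\<lambda>x. f (l *\<^sub>R x)) \<longleftrightarrow> integrable lborel f"
  using lborel_integrable_affine_iff[OF assms(1), of l 0] assms(2) by simp

lemma lborel_integral_scale:
  fixes f :: "'a::euclidean_space \<Rightarrow> 'b::{banach, second_countable_topology}"
  assumes "f \<in> borel_measurable borel" and "0 < l"
  shows "(\<integral>x. f x \<partial>lborel) = l ^ DIM('a) *\<^sub>R (\<integral>x. f (l *\<^sub>R x) \<partial>lborel)"
  using lborel_integral_affine[OF assms(1), of l 0] assms(2) by simp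

lemma integral_dilate_powr:
  fixes rho :: "'a::euclidean_space \<Rightarrow> real"
  assumes [measurable]: "rho \<in> borel_measurable borel" and rho: "\<And>x. 0 \<le> rho x" and l: "0 < l"
  shows "(\<integral>x. dilate l rho x powr m \<partial>lborel) = l powr (real DIM('a) * (m - 1)) * (\<integral>x. rho x powr m \<partial>lborel)"
proof -
  have "(\<integral>x. dilate l rho x powr m \<partial>lborel) = l powr (real DIM('a) * m) * (\<integral>x. rho (l *\<^sub>R x) powr m \<partial>lborel)"
    using l rho by (simp add: dilate_def powr_mult powr_realpow[symmetric] powr_powr)
  also have "(\<integral>x. rho (l *\<^sub>R x) powr m \<partial>lborel) = (\<integral>x. rho x powr m \<partial>lborel) / l ^ DIM('a)"
    using lborel_integral_scale[of "\<lambda>x. rho x powr m" l] l by simp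
  finally show ?thesis
    using l by (simp add: powr_realpow[symmetric] right_diff_distrib powr_diff)
qed

lemma dilate_admissible:
  fixes rho :: "'a::euclidean_space \<Rightarrow> real"
  assumes rho: "rho \<in> admissible m M" and l: "0 < l"
  shows "dilate l rho \<in> admissible m M"
proof -
  have [measurable]: "rho \<in> borel_measurable borel" and nonneg: "\<And>x. 0 \<le> rho x"
    and int: "integrable lborel rho" and int_powr: "integrable lborel (\<lambda>x. rho x powr m)"
    and int_moment: "integrable lborel (\<lambda>x. rho x *\<^sub>R x)"
    and mass: "(\<integral>x. rho x \<partial>lborel) = M" and moment: "(\<integral>x. rho x *\<^sub>R x \<partial>lborel) = 0"
    using rho by (auto simp: admissible_def measurable_cong_sets[OF sets_lborel refl])
  have moment_measurable: "(\<lambda>x. rho x *\<^sub>R x) \<in> borel_measurable borel"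
    by measurable
  have dilate_powr: "dilate l rho x powr m = l powr (real DIM('a) * m) * rho (l *\<^sub>R x) powr m" for x
    using l nonneg by (simp add: dilate_def powr_mult powr_realpow[symmetric] powr_powr)
  have dilate_moment: "dilate l rho x *\<^sub>R x = (l ^ DIM('a) / l) *\<^sub>R (rho (l *\<^sub>R x) *\<^sub>R (l *\<^sub>R x))" for x
    using l by (simp add: dilate_def)
  have "integrable lborel (\<lambda>x. rho (l *\<^sub>R x))"
    using lborel_integrable_scale_iff[of rho l] l int by simp
  then have "integrable lborel (dilate l rho)"
    unfolding dilate_def by (rule integrable_mult_right)
  moreover have "integrable lborel (\<lambda>x. rho (l *\<^sub>R x) powr m)"
    using lborel_integrable_scale_iff[of "\<lambda>x. rho x powr m" l] l int_powr by simp
  then have "integrable lborel (\<lambda>x. dilate l rho x powr m)"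
    unfolding dilate_powr by (rule integrable_mult_right)
  moreover have "integrable lborel (\<lambda>x. rho (l *\<^sub>R x) *\<^sub>R (l *\<^sub>R x))"
    using lborel_integrable_scale_iff[OF moment_measurable l] int_moment by blast
  then have "integrable lborel (\<lambda>x. dilate l rho x *\<^sub>R x)"
    unfolding dilate_moment by (rule integrable_scaleR_right)
  moreover have "(\<integral>x. dilate l rho x \<partial>lborel) = M"
    using lborel_integral_scale[of rho l] l mass by (simp add: dilate_def)
  moreover have "(\<integral>x. rho (l *\<^sub>R x) *\<^sub>R (l *\<^sub>R x) \<partial>lborel) = 0"
    using lborel_integral_scale[OF moment_measurable l] l moment by simp
  then have "(\<integral>x. dilate l rho x *\<^sub>R x \<partial>lborel) = 0"
    unfolding dilate_moment integral_scaleR_right by simp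
  ultimately show ?thesis
    using l nonneg unfolding admissible_def
    by (auto simp: dilate_def[abs_def] measurable_cong_sets[OF sets_lborel refl])
qed

lemma riesz_conv_dilate:
  fixes rho :: "'a::euclidean_space \<Rightarrow> real"
  assumes [measurable]: "rho \<in> borel_measurable borel" and l: "0 < l"
  shows "riesz_conv s (dilate l rho) x = ennreal (l powr (real DIM('a) - s)) * riesz_conv s rho (l *\<^sub>R x)"
proof -
  let ?n = "DIM('a)"
  define f where "f z = ennreal (riesz_kernel s (x - (1 / l) *\<^sub>R z) * rho z)" for z :: 'a
  have [measurable]: "f \<in> borel_measurable borel"
    unfolding f_def by measurable
  have kernel: "riesz_kernel s (x - (1 / l) *\<^sub>R z) = l powr (real ?n - s) * riesz_kernel s (l *\<^sub>R x - z)" for z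
  proof -
    have "x - (1 / l) *\<^sub>R z = (1 / l) *\<^sub>R (l *\<^sub>R x - z)"
      using l by (simp add: algebra_simps)
    then have "norm (x - (1 / l) *\<^sub>R z) powr (s - real ?n) = norm (l *\<^sub>R x - z) powr (s - real ?n) / l powr (s - real ?n)"
      using l by (simp add: powr_divide)
    also have "\<dots> = l powr (real ?n - s) * norm (l *\<^sub>R x - z) powr (s - real ?n)"
      using powr_minus_divide[of l "s - real ?n"] by simp
    finally show ?thesis
      by (simp add: riesz_kernel_def)
  qed
  have "riesz_conv s (dilate l rho) x = (\<integral>\<^sup>+y. ennreal (l ^ ?n) * f (l *\<^sub>R y) \<partial>lborel)"
    unfolding riesz_conv_def f_def dilate_def
    using l by (intro nn_integral_cong) (simp add: ennreal_mult'[symmetric] ac_simps)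
  also have "\<dots> = (\<integral>\<^sup>+z. f z \<partial>lborel)"
    using nn_integral_lborel_affine[of f l 0] l by (simp add: nn_integral_cmult)
  also have "\<dots> = (\<integral>\<^sup>+z. ennreal (l powr (real ?n - s)) * ennreal (riesz_kernel s (l *\<^sub>R x - z) * rho z) \<partial>lborel)"
    unfolding f_def kernel by (intro nn_integral_cong) (simp add: ennreal_mult'[symmetric] ac_simps)
  also have "\<dots> = ennreal (l powr (real ?n - s)) * riesz_conv s rho (l *\<^sub>R x)"
    unfolding riesz_conv_def by (rule nn_integral_cmult) measurable
  finally show ?thesis .
qed

lemma nn_integral_riesz_conv_dilate_powr:
  fixes rho :: "'a::euclidean_space \<Rightarrow> real"
  assumes [measurable]: "rho \<in> borel_measurable borel" and l: "0 < l" and m: "0 < m"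
  shows "(\<integral>\<^sup>+x. enn_powr (riesz_conv s (dilate l rho) x) m \<partial>lborel)
    = ennreal (l powr riesz_energy_exponent DIM('a) m s) * (\<integral>\<^sup>+x. enn_powr (riesz_conv s rho x) m \<partial>lborel)"
proof -
  let ?n = "DIM('a)" and ?B = "\<integral>\<^sup>+x. enn_powr (riesz_conv s rho x) m \<partial>lborel"
  have "(\<integral>\<^sup>+x. enn_powr (riesz_conv s (dilate l rho) x) m \<partial>lborel)
      = (\<integral>\<^sup>+x. ennreal (l powr ((real ?n - s) * m)) * enn_powr (riesz_conv s rho (l *\<^sub>R x)) m \<partial>lborel)"
    using l m by (intro nn_integral_cong) (simp add: riesz_conv_dilate enn_powr_mult_ennreal powr_powr)
  also have "\<dots> = ennreal (l powr ((real ?n - s) * m)) * (\<integral>\<^sup>+x. enn_powr (riesz_conv s rho (l *\<^sub>R x)) m \<partial>lborel)"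
    by (rule nn_integral_cmult) measurable
  also have "(\<integral>\<^sup>+x. enn_powr (riesz_conv s rho (l *\<^sub>R x)) m \<partial>lborel) = ennreal (1 / l ^ ?n) * ?B"
    using nn_integral_lborel_affine[of "\<lambda>x. enn_powr (riesz_conv s rho x) m" l 0] l
    by (simp add: mult.assoc[symmetric] ennreal_mult'[symmetric])
  also have "ennreal (l powr ((real ?n - s) * m)) * (ennreal (1 / l ^ ?n) * ?B)
      = ennreal (l powr riesz_energy_exponent ?n m s) * ?B"
    using l by (simp add: riesz_energy_exponent_def mult.assoc[symmetric] ennreal_mult'[symmetric] powr_diff powr_realpow)
  finally show ?thesis .
qed

section \<open>Minimizers: Pohozaev identity and a bound on the diffusion energy\<close>

lemma stationary_of_dilation_minimum:
  fixes A B \<alpha> \<beta> :: real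
  assumes min: "\<And>l. 0 < l \<Longrightarrow> A - B \<le> l powr \<alpha> * A - l powr \<beta> * B"
  shows "\<alpha> * A = \<beta> * B"
proof -
  define h where "h l = l powr \<alpha> * A - l powr \<beta> * B" for l :: real
  have deriv: "(h has_real_derivative \<alpha> * A - \<beta> * B) (at 1)"
    unfolding h_def by (auto intro!: derivative_eq_intros)
  have local_min: "\<forall>y. \<bar>1 - y\<bar> < 1 \<longrightarrow> h 1 \<le> h y"
    using min by (auto simp: h_def)
  have "\<alpha> * A - \<beta> * B = 0"
    by (rule DERIV_local_min[OF deriv zero_less_one local_min])
  then show ?thesis by simp
qed

lemma free_energy_conj_exp:
  assumes p: "1 < p" and m: "m = conj_exp p"
    and interaction: "(\<integral>\<^sup>+x. enn_powr (riesz_conv s rho x) m \<partial>lborel) = ennreal B" and B: "0 \<le> B"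
  shows "free_energy m p s p rho = ereal ((p - 1) * ((\<integral>x. rho x powr m \<partial>lborel) - B))"
proof -
  have coefficients: "1 / (m - 1) = p - 1" "p / m = p - 1"
    using p by (simp_all add: m conj_exp_def field_simps)
  show ?thesis
    unfolding free_energy_def m[symmetric] coefficients interaction
    using B by (simp add: right_diff_distrib)
qed

locale riesz_minimizer =
  fixes p m M s :: real and rho :: "'a::euclidean_space \<Rightarrow> real"
  assumes p: "1 < p" and m_def: "m = conj_exp p" and M: "0 < M"
    and s: "0 < s" "s < real DIM('a) / p"
    and admissible: "rho \<in> admissible m M"
    and minimal: "\<And>\<sigma>::'a \<Rightarrow> real. \<sigma> \<in> admissible m M \<Longrightarrow> free_energy m p s p rho \<le> free_energy m p s p \<sigma>"
begin

definition diffusion_energy :: real where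
  "diffusion_energy = (\<integral>x. rho x powr m \<partial>lborel)"

definition interaction_energy :: real where
  "interaction_energy = enn2real (\<integral>\<^sup>+x. enn_powr (riesz_conv s rho x) m \<partial>lborel)"

lemma m_gt_1: "1 < m"
  using p by (simp add: m_def conj_exp_def field_simps)

lemma s_lt_dim: "s < real DIM('a)"
proof -
  have "real DIM('a) / p < real DIM('a)"
    using p by (simp add: divide_less_eq)
  then show ?thesis using s(2) by linarith
qed

lemma energy_exponent_pos: "0 < riesz_energy_exponent DIM('a) m s"
proof -
  have "real DIM('a) * (p - 1) < (real DIM('a) - s) * p"
    using s p by (simp add: field_simps)
  then show ?thesis
    using p by (simp add: riesz_energy_exponent_def m_def conj_exp_def field_simps)
qed

lemma rho_measurable [measurable]: "rho \<in> borel_measurable borel"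
  and rho_nonneg: "0 \<le> rho x"
  using admissible by (auto simp: admissible_def measurable_cong_sets[OF sets_lborel refl])

lemma nn_integral_rho: "(\<integral>\<^sup>+x. ennreal (rho x) \<partial>lborel) = ennreal M"
  using admissible nn_integral_eq_integral[of lborel rho] by (simp add: admissible_def)

lemma diffusion_energy_nonneg: "0 \<le> diffusion_energy"
  unfolding diffusion_energy_def by (simp add: integral_nonneg_AE)

lemma nn_integral_rho_powr: "(\<integral>\<^sup>+x. ennreal (rho x powr m) \<partial>lborel) = ennreal diffusion_energy"
  using admissible nn_integral_eq_integral[of lborel "\<lambda>x. rho x powr m"]
  by (simp add: admissible_def diffusion_energy_def)

lemma interaction_energy_split_le:
  assumes R: "0 < R" and t: "0 < t" "t < 1"
  shows "(\<integral>\<^sup>+x. enn_powr (riesz_conv s rho x) m \<partial>lborel)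
    \<le> ennreal (t powr (1 - m) * riesz_near_mass DIM('a) s R powr m * diffusion_energy
        + (1 - t) powr (1 - m) * M powr m * riesz_far_energy DIM('a) m s R)"
proof -
  have "0 < riesz_far_energy DIM('a) m s R"
    using riesz_const_pos[OF s(1) s_lt_dim] energy_exponent_pos R by (simp add: riesz_far_energy_def)
  then show ?thesis
    using nn_integral_riesz_conv_powr_le[OF rho_measurable rho_nonneg nn_integral_rho M s(1) s_lt_dim R m_gt_1 energy_exponent_pos t]
      diffusion_energy_nonneg M t
    by (simp add: nn_integral_rho_powr ennreal_mult'[symmetric] ennreal_plus[symmetric] del: ennreal_plus)
qed

lemma nn_integral_interaction:
  "(\<integral>\<^sup>+x. enn_powr (riesz_conv s rho x) m \<partial>lborel) = ennreal interaction_energy"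
proof -
  have "(\<integral>\<^sup>+x. enn_powr (riesz_conv s rho x) m \<partial>lborel) \<noteq> \<infinity>"
    using interaction_energy_split_le[of 1 "1 / 2"] by (auto simp: top_unique)
  then show ?thesis by (simp add: interaction_energy_def less_top)
qed

lemma interaction_energy_nonneg: "0 \<le> interaction_energy"
  by (simp add: interaction_energy_def)

lemma free_energy_eq: "free_energy m p s p rho = ereal ((p - 1) * (diffusion_energy - interaction_energy))"
  using free_energy_conj_exp[OF p m_def nn_integral_interaction interaction_energy_nonneg]
  by (simp add: diffusion_energy_def)

lemma pohozaev:
  "real DIM('a) * (m - 1) * diffusion_energy = riesz_energy_exponent DIM('a) m s * interaction_energy"
proof (rule stationary_of_dilation_minimum)
  fix l :: real
  assume l: "0 < l"
  have "(\<integral>\<^sup>+x. enn_powr (riesz_conv s (dilate l rho) x) m \<partial>lborel)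
      = ennreal (l powr riesz_energy_exponent DIM('a) m s * interaction_energy)"
    using nn_integral_riesz_conv_dilate_powr[OF rho_measurable l] m_gt_1 interaction_energy_nonneg
    by (simp add: nn_integral_interaction ennreal_mult'[symmetric])
  then have "free_energy m p s p (dilate l rho) = ereal ((p - 1) *
      ((\<integral>x. dilate l rho x powr m \<partial>lborel) - l powr riesz_energy_exponent DIM('a) m s * interaction_energy))"
    by (rule free_energy_conj_exp[OF p m_def]) (simp add: interaction_energy_nonneg)
  also have "(\<integral>x. dilate l rho x powr m \<partial>lborel) = l powr (real DIM('a) * (m - 1)) * diffusion_energy"
    using integral_dilate_powr[OF rho_measurable rho_nonneg l] by (simp add: diffusion_energy_def)
  moreover have "free_energy m p s p rho \<le> free_energy m p s p (dilate l rho)"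
    by (rule minimal[OF dilate_admissible[OF admissible l]])
  ultimately show "diffusion_energy - interaction_energy
      \<le> l powr (real DIM('a) * (m - 1)) * diffusion_energy - l powr riesz_energy_exponent DIM('a) m s * interaction_energy"
    using p by (simp add: free_energy_eq)
qed

end

context riesz_minimizer
begin

lemma free_energy_minimizer_eq:
  "free_energy m p s p rho = ereal (- (p - 1) * m * (s / riesz_energy_exponent DIM('a) m s) * diffusion_energy)"
proof -
  let ?\<beta> = "riesz_energy_exponent DIM('a) m s"
  have "?\<beta> * (diffusion_energy - interaction_energy) = - (s * m * diffusion_energy)"
    using pohozaev by (simp add: riesz_energy_exponent_def algebra_simps)
  then have "diffusion_energy - interaction_energy = - (m * (s / ?\<beta>) * diffusion_energy)"
    using energy_exponent_pos by (simp add: field_simps)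
  then have "(p - 1) * (diffusion_energy - interaction_energy) = - (p - 1) * m * (s / ?\<beta>) * diffusion_energy"
    by (simp only: mult_minus_right mult_minus_left mult.assoc)
  then show ?thesis
    by (simp only: free_energy_eq)
qed

lemma interaction_energy_root_le:
  assumes R: "0 < R" and diffusion_pos: "0 < diffusion_energy"
  shows "interaction_energy powr (1 / m)
    \<le> riesz_near_mass DIM('a) s R * diffusion_energy powr (1 / m) + M * riesz_far_energy DIM('a) m s R powr (1 / m)"
proof (rule powr_inverse_le_of_split_bound)
  let ?G = "riesz_near_mass DIM('a) s R" and ?H = "riesz_far_energy DIM('a) m s R"
  have G: "0 < ?G" and H: "0 < ?H"
    using riesz_const_pos[OF s(1) s_lt_dim] energy_exponent_pos s R
    by (simp_all add: riesz_near_mass_def riesz_far_energy_def)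
  then show "0 < ?G * diffusion_energy powr (1 / m)" "0 < M * ?H powr (1 / m)"
    using diffusion_pos M by simp_all
  show "0 < m" "0 \<le> interaction_energy"
    using m_gt_1 interaction_energy_nonneg by simp_all
  fix t :: real
  assume t: "0 < t" "t < 1"
  have "0 \<le> t powr (1 - m) * ?G powr m * diffusion_energy + (1 - t) powr (1 - m) * M powr m * ?H"
    using diffusion_energy_nonneg M H by simp
  then have "interaction_energy \<le> t powr (1 - m) * ?G powr m * diffusion_energy + (1 - t) powr (1 - m) * M powr m * ?H"
    using interaction_energy_split_le[OF R t] by (simp add: nn_integral_interaction)
  moreover have "(?G * diffusion_energy powr (1 / m)) powr m = ?G powr m * diffusion_energy"
    and "(M * ?H powr (1 / m)) powr m = M powr m * ?H"
    using G H M diffusion_pos m_gt_1 by (simp_all add: powr_mult powr_powr)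
  ultimately show "interaction_energy
      \<le> t powr (1 - m) * (?G * diffusion_energy powr (1 / m)) powr m + (1 - t) powr (1 - m) * (M * ?H powr (1 / m)) powr m"
    by (simp add: mult.assoc)
qed

lemma diffusion_energy_root_bound:
  assumes R: "0 < R" and near_mass: "riesz_near_mass DIM('a) s R \<le> 1"
  shows "diffusion_energy powr (1 / m) * s \<le> real DIM('a) * (m - 1) * M * riesz_far_energy DIM('a) m s R powr (1 / m)"
proof (cases "diffusion_energy = 0")
  case True
  then show ?thesis using m_gt_1 M by simp
next
  case False
  let ?\<alpha> = "real DIM('a) * (m - 1)" and ?\<beta> = "riesz_energy_exponent DIM('a) m s"
  let ?a = "diffusion_energy powr (1 / m)"
  have A: "0 < diffusion_energy" using False diffusion_energy_nonneg by simp
  have \<alpha>: "0 < ?\<alpha>" and \<beta>: "0 < ?\<beta>" and \<alpha>\<beta>: "?\<alpha> = ?\<beta> + s * m"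
    using m_gt_1 energy_exponent_pos by (simp_all add: riesz_energy_exponent_def algebra_simps)
  \<comment> \<open>Pohozaev makes the interaction a fixed multiple \<open>\<alpha> / \<beta> > 1\<close> of the diffusion, while Young's
    inequality bounds it by the diffusion plus a remainder of order \<open>s\<close>\<close>
  have "interaction_energy = ?\<alpha> / ?\<beta> * diffusion_energy"
    using pohozaev \<beta> by (simp add: field_simps)
  moreover have "0 \<le> ?\<alpha> / ?\<beta>"
    using \<alpha> \<beta> by simp
  ultimately have "(?\<alpha> / ?\<beta>) powr (1 / m) * ?a = interaction_energy powr (1 / m)"
    using powr_mult diffusion_energy_nonneg by metis
  also have "\<dots> \<le> riesz_near_mass DIM('a) s R * ?a + M * riesz_far_energy DIM('a) m s R powr (1 / m)"
    by (rule interaction_energy_root_le[OF R A])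
  also have "\<dots> \<le> ?a + M * riesz_far_energy DIM('a) m s R powr (1 / m)"
    using near_mass mult_right_mono[OF near_mass, of ?a] by simp
  finally have "((?\<alpha> / ?\<beta>) powr (1 / m) - 1) * ?a \<le> M * riesz_far_energy DIM('a) m s R powr (1 / m)"
    by (simp add: algebra_simps)
  moreover have "s / ?\<alpha> \<le> (?\<alpha> / ?\<beta>) powr (1 / m) - 1"
  proof -
    have "(?\<alpha> - ?\<beta>) / (m * ?\<alpha>) = s / ?\<alpha>"
      using \<alpha>\<beta> m_gt_1 by simp
    then show ?thesis
      using one_plus_le_ratio_powr_inverse[of ?\<beta> ?\<alpha> m] \<alpha>\<beta> \<beta> s m_gt_1 by simp
  qed
  ultimately have "s / ?\<alpha> * ?a \<le> M * riesz_far_energy DIM('a) m s R powr (1 / m)"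
    by (meson mult_right_mono order_trans powr_ge_zero)
  then show ?thesis
    using \<alpha> by (simp add: field_simps)
qed

end

section \<open>The limit s to 0\<close>

(* c_{n,s/2} / s, with s / Gamma (s/2) rewritten as 2 * rGamma (s/2 + 1) so that it is smooth at s = 0 *)
definition riesz_factor :: "nat \<Rightarrow> real \<Rightarrow> real" where
  "riesz_factor n s = pi powr (- real n / 2) * 2 powr (- s) * Gamma (real n / 2 - s / 2) * rGamma (s / 2 + 1) / 2"

lemma riesz_const_eq_riesz_factor:
  assumes s: "0 < s"
  shows "riesz_const n (s / 2) = s * riesz_factor n s"
proof -
  have "Gamma (s / 2 + 1) = s / 2 * Gamma (s / 2)"
    using s by (intro Gamma_plus1) (auto dest: nonpos_Ints_nonpos)
  moreover have "0 < Gamma (s / 2)"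
    using s by (simp add: Gamma_real_pos)
  ultimately have "s / 2 * rGamma (s / 2 + 1) = 1 / Gamma (s / 2)"
    using s by (simp add: rGamma_inverse_Gamma field_simps)
  moreover have "s * riesz_factor n s
      = pi powr (- real n / 2) * 2 powr (- s) * Gamma (real n / 2 - s / 2) * (s / 2 * rGamma (s / 2 + 1))"
    by (simp add: riesz_factor_def)
  ultimately show ?thesis
    by (simp add: riesz_const_def)
qed

lemma riesz_factor_zero:
  assumes n: "0 < n"
  shows "riesz_factor n 0 * (real n * unit_ball_vol (real n)) = 1"
proof -
  have "Gamma (real n / 2 + 1) = real n / 2 * Gamma (real n / 2)"
    using n by (intro Gamma_plus1) (auto dest: nonpos_Ints_nonpos)
  moreover have "pi powr (- real n / 2) * pi powr (real n / 2) = 1"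
    using powr_minus[of pi "real n / 2"] by simp
  moreover have "Gamma (real n / 2) \<noteq> 0"
    using Gamma_real_pos[of "real n / 2"] n by fastforce
  ultimately show ?thesis
    using n by (simp add: riesz_factor_def unit_ball_vol_def field_simps)
qed

lemma riesz_factor_has_derivative_at_0:
  assumes n: "0 < n"
  shows "\<exists>D. (riesz_factor n has_real_derivative D) (at 0)"
proof -
  have "real n / 2 - 0 / 2 \<notin> \<int>\<^sub>\<le>\<^sub>0" and "0 / 2 + 1 \<notin> (\<int>\<^sub>\<le>\<^sub>0 :: real set)"
    using n by (auto dest: nonpos_Ints_nonpos)
  then have "((\<lambda>s. Gamma (real n / 2 - s / 2)) has_real_derivative
        Gamma (real n / 2 - 0 / 2) * Digamma (real n / 2 - 0 / 2) * (- 1 / 2)) (at 0)"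
    and "((\<lambda>s. rGamma (s / 2 + 1)) has_real_derivative - rGamma (0 / 2 + 1) * Digamma (0 / 2 + 1) * (1 / 2)) (at 0)"
    by (auto intro!: DERIV_chain2[where f=Gamma, OF has_field_derivative_Gamma]
        DERIV_chain2[where f=rGamma, OF has_field_derivative_rGamma_no_nonpos_int] derivative_eq_intros)
  moreover have "((\<lambda>s. 2 powr (- s)) has_real_derivative 2 powr (- 0) * (- ln 2)) (at 0)"
    by (auto intro!: derivative_eq_intros)
  ultimately show ?thesis
    unfolding riesz_factor_def[abs_def]
    by (intro exI) (rule DERIV_cdivide DERIV_mult DERIV_const | assumption)+
qed

lemma eventually_riesz_near_mass_le_one:
  assumes n: "0 < n"
  obtains R where "0 < R" "eventually (\<lambda>s. riesz_near_mass n s R \<le> 1) (at_right 0)"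
proof -
  define w where "w = real n * unit_ball_vol (real n)"
  define g where "g s = w * riesz_factor n s" for s
  obtain D where "(riesz_factor n has_real_derivative D) (at 0)"
    using riesz_factor_has_derivative_at_0[OF n] by blast
  then have "(g has_real_derivative w * D) (at 0)"
    unfolding g_def[abs_def] by (rule DERIV_cmult)
  then have "(g has_real_derivative w * D) (at 0 within {0<..})"
    by (rule has_field_derivative_at_within)
  then have "((\<lambda>s. (g s - g 0) / (s - 0)) \<longlongrightarrow> w * D) (at_right 0)"
    by (simp add: has_field_derivative_iff)
  then have slope: "eventually (\<lambda>s. (g s - g 0) / (s - 0) < w * D + 1) (at_right 0)"
    by (rule order_tendstoD) simp
  have g0: "g 0 = 1"
    using riesz_factor_zero[OF n] by (simp add: g_def w_def mult.commute)
  \<comment> \<open>the near mass is \<open>g s * R powr s\<close> with \<open>g 0 = 1\<close>; a radius \<open>R = exp (- E)\<close> with \<open>E\<close> above the slope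
    of \<open>g\<close> at \<open>0\<close> makes it at most \<open>1\<close>\<close>
  define E where "E = \<bar>w * D\<bar> + 1"
  have "eventually (\<lambda>s. riesz_near_mass n s (exp (- E)) \<le> 1) (at_right 0)"
    using slope eventually_at_right_less[of 0]
  proof eventually_elim
    case (elim s)
    have "g s - 1 < (w * D + 1) * s"
      using elim g0 by (simp add: field_simps)
    also have "\<dots> \<le> E * s"
      using elim by (intro mult_right_mono) (auto simp: E_def)
    finally have "g s \<le> exp (E * s)"
      using exp_ge_add_one_self[of "E * s"] by linarith
    moreover have "exp (- E) powr s = exp (- (E * s))"
      by (simp add: powr_def)
    ultimately have "g s * exp (- E) powr s \<le> exp (E * s) * exp (- (E * s))"
      by (simp add: mult_right_mono)
    moreover have "riesz_near_mass n s (exp (- E)) = g s * exp (- E) powr s"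
      using elim by (simp add: riesz_near_mass_def riesz_const_eq_riesz_factor g_def w_def)
    ultimately show ?case by (simp add: exp_minus)
  qed
  then show ?thesis
    using that[of "exp (- E)"] by simp
qed

lemma eventually_riesz_far_energy_root_le:
  assumes n: "0 < n" and m: "1 < m" and R: "0 < R"
  obtains K where "eventually (\<lambda>s. riesz_far_energy n m s R powr (1 / m) \<le> K * s) (at_right 0)"
proof -
  define Q where "Q s = real n * unit_ball_vol (real n) * R powr (- riesz_energy_exponent n m s) / riesz_energy_exponent n m s" for s
  define \<Psi> where "\<Psi> s = riesz_factor n s * Q s powr (1 / m)" for s
  have exponent_0: "riesz_energy_exponent n m 0 = real n * (m - 1)"
    by (simp add: riesz_energy_exponent_def algebra_simps)
  have exponent_tendsto: "((\<lambda>s. riesz_energy_exponent n m s) \<longlongrightarrow> real n * (m - 1)) (at_right 0)"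
    unfolding exponent_0[symmetric] riesz_energy_exponent_def by (intro tendsto_intros)
  have "0 < Q 0"
    using n m R by (simp add: Q_def exponent_0)
  moreover have "(Q \<longlongrightarrow> Q 0) (at_right 0)"
    unfolding Q_def[abs_def] exponent_0 using n m R
    by (intro tendsto_intros exponent_tendsto) auto
  ultimately have Q_root: "((\<lambda>s. Q s powr (1 / m)) \<longlongrightarrow> Q 0 powr (1 / m)) (at_right 0)"
    by (intro tendsto_powr tendsto_const) auto
  obtain D where "(riesz_factor n has_real_derivative D) (at 0)"
    using riesz_factor_has_derivative_at_0[OF n] by blast
  then have "(riesz_factor n \<longlongrightarrow> riesz_factor n 0) (at_right 0)"
    using DERIV_isCont unfolding isCont_def by (blast intro: tendsto_mono[OF at_le, rotated])
  then have "(\<Psi> \<longlongrightarrow> \<Psi> 0) (at_right 0)"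
    unfolding \<Psi>_def[abs_def] using Q_root by (rule tendsto_mult)
  then have "eventually (\<lambda>s. \<Psi> s < \<Psi> 0 + 1) (at_right 0)"
    by (rule order_tendstoD) simp
  moreover have "eventually (\<lambda>s. 0 < riesz_energy_exponent n m s) (at_right 0)"
    using exponent_tendsto n m by (intro order_tendstoD) auto
  moreover have "eventually (\<lambda>s. s < real n) (at_right (0::real))"
    using n by (intro order_tendstoD(2)[OF tendsto_ident_at]) simp
  ultimately have "eventually (\<lambda>s. riesz_far_energy n m s R powr (1 / m) \<le> (\<Psi> 0 + 1) * s) (at_right 0)"
    using eventually_at_right_less[of 0]
  proof eventually_elim
    case (elim s)
    have c: "0 < riesz_const n (s / 2)"
      using riesz_const_pos elim by simp
    have "riesz_far_energy n m s R = riesz_const n (s / 2) powr m * Q s" and "0 \<le> Q s"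
      using elim R by (simp_all add: riesz_far_energy_def Q_def)
    then have "riesz_far_energy n m s R powr (1 / m) = riesz_const n (s / 2) * Q s powr (1 / m)"
      using c m by (simp add: powr_mult powr_powr)
    also have "\<dots> = s * \<Psi> s"
      using elim by (simp add: riesz_const_eq_riesz_factor \<Psi>_def)
    also have "\<dots> \<le> (\<Psi> 0 + 1) * s"
      using elim by (simp add: mult.commute)
    finally show ?case .
  qed
  then show ?thesis using that by blast
qed

lemma eventually_riesz_minimizer:
  fixes rho :: "real \<Rightarrow> 'a::euclidean_space \<Rightarrow> real"
  assumes p: "1 < p" and M: "0 < M" and m: "m = conj_exp p"
    and minimizers: "\<forall>s \<in> {0<..<real DIM('a) / p}. rho s \<in> admissible m M \<and>
      (\<forall>\<sigma>::'a \<Rightarrow> real \<in> admissible m M. free_energy m p s p (rho s) \<le> free_energy m p s p \<sigma>)"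
  shows "eventually (\<lambda>s. riesz_minimizer p m M s (rho s)) (at_right 0)"
proof -
  have "eventually (\<lambda>s. s < real DIM('a) / p) (at_right (0::real))"
    using p by (intro order_tendstoD(2)[OF tendsto_ident_at]) simp
  then show ?thesis
    using eventually_at_right_less[of 0]
    by eventually_elim (use p M m minimizers in \<open>auto simp: riesz_minimizer_def\<close>)
qed

lemma minimizers_diffusion_energy_bounded:
  fixes rho :: "real \<Rightarrow> 'a::euclidean_space \<Rightarrow> real"
  assumes p: "1 < p" and M: "0 < M" and m: "m = conj_exp p"
    and minimizers: "eventually (\<lambda>s. riesz_minimizer p m M s (rho s)) (at_right 0)"
  obtains K where "eventually (\<lambda>s. riesz_minimizer.diffusion_energy m (rho s) \<le> K) (at_right 0)"
proof -
  let ?n = "DIM('a)"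
  have m1: "1 < m"
    using p by (simp add: m conj_exp_def field_simps)
  obtain R where R: "0 < R" and near: "eventually (\<lambda>s. riesz_near_mass ?n s R \<le> 1) (at_right 0)"
    using eventually_riesz_near_mass_le_one[of ?n] by auto
  obtain K where far: "eventually (\<lambda>s. riesz_far_energy ?n m s R powr (1 / m) \<le> K * s) (at_right 0)"
    using eventually_riesz_far_energy_root_le[OF _ m1 R, of ?n] by auto
  have "eventually (\<lambda>s. riesz_minimizer.diffusion_energy m (rho s) \<le> (real ?n * (m - 1) * M * K) powr m) (at_right 0)"
    using minimizers near far eventually_at_right_less[of 0]
  proof eventually_elim
    case (elim s)
    interpret riesz_minimizer p m M s "rho s" by (rule elim(1))
    have "diffusion_energy powr (1 / m) * s \<le> real ?n * (m - 1) * M * riesz_far_energy ?n m s R powr (1 / m)"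
      by (rule diffusion_energy_root_bound[OF R elim(2)])
    also have "\<dots> \<le> real ?n * (m - 1) * M * (K * s)"
      using elim(3) m1 M by (intro mult_left_mono) auto
    finally have "diffusion_energy powr (1 / m) \<le> real ?n * (m - 1) * M * K"
      using elim(4) by (simp add: mult.assoc)
    then have "(diffusion_energy powr (1 / m)) powr m \<le> (real ?n * (m - 1) * M * K) powr m"
      using m1 by (intro powr_mono2) auto
    then show ?case
      using diffusion_energy_nonneg m1 by (simp add: powr_powr)
  qed
  then show ?thesis using that by blast
qed

lemma tendsto_mult_zero_eventually_bounded:
  fixes f g :: "'a \<Rightarrow> real"
  assumes f: "(f \<longlongrightarrow> 0) F" and g: "eventually (\<lambda>x. \<bar>g x\<bar> \<le> K) F"
  shows "((\<lambda>x. f x * g x) \<longlongrightarrow> 0) F"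
  using g by (intro tendsto_0_le[OF f, of _ K]) (auto elim!: eventually_mono simp: abs_mult mult_left_mono)

lemma minimizers_free_energy_tendsto_0:
  fixes rho :: "real \<Rightarrow> 'a::euclidean_space \<Rightarrow> real"
  assumes p: "1 < p" and M: "0 < M" and m: "m = conj_exp p"
    and minimizers: "eventually (\<lambda>s. riesz_minimizer p m M s (rho s)) (at_right 0)"
  shows "((\<lambda>s. free_energy m p s p (rho s)) \<longlongrightarrow> 0) (at_right 0)"
proof -
  let ?\<beta> = "riesz_energy_exponent DIM('a) m" and ?A = "\<lambda>s. riesz_minimizer.diffusion_energy m (rho s)"
  obtain K where K: "eventually (\<lambda>s. ?A s \<le> K) (at_right 0)"
    using minimizers_diffusion_energy_bounded[OF p M m minimizers] by blast
  have "((\<lambda>s. - (p - 1) * m * (s / ?\<beta> s)) \<longlongrightarrow> - (p - 1) * m * (0 / ?\<beta> 0)) (at_right 0)"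
    using p unfolding riesz_energy_exponent_def
    by (intro tendsto_intros) (simp add: m conj_exp_def field_simps)
  moreover have "eventually (\<lambda>s. \<bar>?A s\<bar> \<le> K) (at_right 0)"
    using K minimizers by eventually_elim (simp add: riesz_minimizer.diffusion_energy_nonneg)
  ultimately have "((\<lambda>s. - (p - 1) * m * (s / ?\<beta> s) * ?A s) \<longlongrightarrow> 0) (at_right 0)"
    by (intro tendsto_mult_zero_eventually_bounded[of "\<lambda>s. - (p - 1) * m * (s / ?\<beta> s)"]) simp_all
  moreover have "eventually (\<lambda>s. free_energy m p s p (rho s) = ereal (- (p - 1) * m * (s / ?\<beta> s) * ?A s)) (at_right 0)"
    using minimizers by eventually_elim (simp add: riesz_minimizer.free_energy_minimizer_eq)
  ultimately show ?thesis
    by (simp add: tendsto_cong zero_ereal_def lim_ereal)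
qed

lemma minimizers_scaled_diffusion_energy_tendsto_0:
  fixes rho :: "real \<Rightarrow> 'a::euclidean_space \<Rightarrow> real"
  assumes p: "1 < p" and M: "0 < M" and m: "m = conj_exp p"
    and minimizers: "eventually (\<lambda>s. riesz_minimizer p m M s (rho s)) (at_right 0)"
  shows "((\<lambda>s. (sobolev_exp DIM('a) s p - conj_exp m) / M * (\<integral>x. rho s x powr m \<partial>lborel)) \<longlongrightarrow> 0) (at_right 0)"
proof -
  obtain K where "eventually (\<lambda>s. riesz_minimizer.diffusion_energy m (rho s) \<le> K) (at_right 0)"
    using minimizers_diffusion_energy_bounded[OF p M m minimizers] by blast
  with minimizers have bounded: "eventually (\<lambda>s. \<bar>\<integral>x. rho s x powr m \<partial>lborel\<bar> \<le> K) (at_right 0)"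
    by eventually_elim (simp add: riesz_minimizer.diffusion_energy_def riesz_minimizer.diffusion_energy_nonneg)
  have "((\<lambda>s. (sobolev_exp DIM('a) s p - conj_exp m) / M) \<longlongrightarrow> (sobolev_exp DIM('a) 0 p - conj_exp m) / M) (at_right 0)"
    using M unfolding sobolev_exp_def by (intro tendsto_intros) auto
  moreover have "sobolev_exp DIM('a) 0 p - conj_exp m = 0"
    using p by (simp add: sobolev_exp_def m conj_exp_def field_simps)
  ultimately have "((\<lambda>s. (sobolev_exp DIM('a) s p - conj_exp m) / M) \<longlongrightarrow> 0) (at_right 0)"
    by simp
  then show ?thesis
    using bounded by (rule tendsto_mult_zero_eventually_bounded)
qed

theorem mainTheorem20:
  fixes p M m chi :: real and rho :: "real \<Rightarrow> 'a::euclidean_space \<Rightarrow> real"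
  assumes "1 < p" and "0 < M"
    and "m = conj_exp p" and "chi = p"
    and "\<forall>s \<in> {0<..<real DIM('a) / p}.
           rho s \<in> admissible m M \<and>
           (\<forall>\<sigma>::'a \<Rightarrow> real \<in> admissible m M. free_energy m chi s p (rho s) \<le> free_energy m chi s p \<sigma>)"
  shows "((\<lambda>s. free_energy m chi s p (rho s)) \<longlongrightarrow> 0) (at_right 0)
    \<and> ((\<lambda>s. (sobolev_exp DIM('a) s p - conj_exp m) / M * (\<integral>x. rho s x powr m \<partial>lborel))
           \<longlongrightarrow> 0) (at_right 0)"
proof -
  have minimizers: "eventually (\<lambda>s. riesz_minimizer p m M s (rho s)) (at_right 0)"
    using eventually_riesz_minimizer[OF assms(1-3)] assms(4,5) by simp
  show ?thesis
    using minimizers_free_energy_tendsto_0[OF assms(1-3) minimizers]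
      minimizers_scaled_diffusion_energy_tendsto_0[OF assms(1-3) minimizers] assms(4)
    by simp
qed

end
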